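(* Let $\mu$ be an infinite cardinal, $C_\mu=\mu\times\mu$, and $W_\mu=\{(w,w')\in C_\mu^\omega : \text{there is no } i \text{ with } w_i<w_{i+1}\text{ and } w'_i<w'_{i+1}\}$ (where a word over $C_\mu$ is written as a pair of words $(w,w')$ over $\mu$). Then the set $\mathrm{Res}(W_\mu)$ of left quotients of $W_\mu$, ordered by inclusion, is a well-quasi-order.
   Context: For $u\in C^*$, the left quotient of $W\subseteq C^\omega$ by $u$ is $u^{-1}W=\{w\in C^\omega: uw\in W\}$; $\mathrm{Res}(W)$ is the set of all left quotients. A partially ordered set is a well-quasi-order if it is well-founded and has no infinite antichain. *)

theory Defs
  imports Main "HOL-Library.Omega_Words_Fun"
begin

definition left_quot :: "'c list \<Rightarrow> 'c word set \<Rightarrow> 'c word set" where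
  "left_quot u W = {w. u \<frown> w \<in> W}"

definition Res :: "'c word set \<Rightarrow> 'c word set set" where
  "Res W = {left_quot u W | u. True}"

definition wqo_incl :: "'b set set \<Rightarrow> bool" where
  "wqo_incl S \<longleftrightarrow>
     wf {(X, Y). X \<in> S \<and> Y \<in> S \<and> X \<subset> Y} \<and>
     \<not> (\<exists>A. A \<subseteq> S \<and> infinite A \<and>
            (\<forall>X\<in>A. \<forall>Y\<in>A. X \<noteq> Y \<longrightarrow> \<not> X \<subseteq> Y \<and> \<not> Y \<subseteq> X))"

text \<open>The language W_mu over the alphabet mu x mu, where a letter is a pair and an
  omega-word w over mu x mu corresponds to the pair (fst o w, snd o w).\<close>
definition W_mu :: "('a::wellorder \<times> 'a) word set" where
  "W_mu = {w. \<not> (\<exists>i. fst (w i) < fst (w (Suc i)) \<and> snd (w i) < snd (w (Suc i)))}"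

text \<open>The well-order on type 'a is (the order of) an infinite cardinal mu:
  infinite, and every proper initial segment has strictly smaller cardinality.\<close>
definition is_inf_cardinal_order :: "'a::wellorder itself \<Rightarrow> bool" where
  "is_inf_cardinal_order _ \<longleftrightarrow> infinite (UNIV :: 'a set) \<and>
     (\<forall>x::'a. (card_of {y. y < x}, card_of (UNIV :: 'a set)) \<in> ordLess)"

end

theory Submission
  imports Defs Complex_Main
begin

text \<open>A nonempty left quotient of \<open>W_mu\<close> by a nonempty word \<open>u\<close> only remembers the last
  letter \<open>c\<close> of \<open>u\<close>: it is the set of words of \<open>W_mu\<close> whose first letter is not above \<open>c\<close>
  in both coordinates, and it grows with \<open>c\<close>. So \<open>Res W_mu\<close> consists of \<open>{}\<close>, \<open>W_mu\<close> and a
  monotone image of \<open>mu \<times> mu\<close>, and Dickson's lemma for \<open>mu \<times> mu\<close> shows that every sequence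
  of quotients contains \<open>X\<^sub>i \<subseteq> X\<^sub>j\<close> with \<open>i < j\<close>. This excludes infinite strictly
  descending chains and infinite antichains alike.\<close>

lemma wellorder_incseq_subseq:
  fixes s :: "nat \<Rightarrow> 'a::wellorder"
  shows "\<exists>f. strict_mono f \<and> incseq (s \<circ> f)"
proof -
  obtain f where f: "strict_mono f" "monoseq (s \<circ> f)"
    using seq_monosub[of s] by (auto simp: comp_def)
  show ?thesis
  proof (cases "incseq (s \<circ> f)")
    case True
    with f show ?thesis by blast
  next
    case False
    with f(2) have dec: "decseq (s \<circ> f)"
      by (simp add: monoseq_iff)
    \<comment> \<open>a decreasing sequence in a well-order is constant from the position of its least value on\<close>
    let ?m = "LEAST x. x \<in> range (s \<circ> f)"
    have "?m \<in> range (s \<circ> f)"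
      by (rule LeastI) (rule rangeI)
    then obtain n where n: "s (f n) = ?m"
      by auto
    have least: "s (f n) \<le> s (f k)" for k
      unfolding n by (rule Least_le, rule range_eqI) simp
    have "s (f (k + n)) = s (f n)" for k
      using least[of "k + n"] dec by (simp add: decseq_def antisym)
    then have "incseq (s \<circ> (\<lambda>k. f (k + n)))"
      by (simp add: incseq_def)
    moreover have "strict_mono (\<lambda>k. f (k + n))"
      using f(1) by (simp add: strict_mono_def)
    ultimately show ?thesis by blast
  qed
qed

lemma dickson_prod_wellorder:
  fixes s :: "nat \<Rightarrow> 'a::wellorder \<times> 'b::wellorder"
  shows "\<exists>i j. i < j \<and> fst (s i) \<le> fst (s j) \<and> snd (s i) \<le> snd (s j)"
proof -
  obtain f where f: "strict_mono f" "incseq (fst \<circ> s \<circ> f)"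
    using wellorder_incseq_subseq[of "fst \<circ> s"] by blast
  obtain g where g: "strict_mono g" "incseq (snd \<circ> s \<circ> f \<circ> g)"
    using wellorder_incseq_subseq[of "snd \<circ> s \<circ> f"] by (auto simp: comp_assoc)
  have "f (g 0) < f (g 1)"
    using f(1) g(1) by (simp add: strict_mono_def)
  moreover have "fst (s (f (g 0))) \<le> fst (s (f (g 1)))"
    using f(2) g(1) by (simp add: incseq_def strict_mono_less_eq)
  moreover have "snd (s (f (g 0))) \<le> snd (s (f (g 1)))"
    using g(2) by (simp add: incseq_def)
  ultimately show ?thesis by blast
qed

lemma wqo_incl_if_good:
  assumes good: "\<And>f :: nat \<Rightarrow> 'b set. range f \<subseteq> S \<Longrightarrow> \<exists>i j. i < j \<and> f i \<subseteq> f j"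
  shows "wqo_incl S"
  unfolding wqo_incl_def
proof (intro conjI notI)
  show "wf {(X, Y). X \<in> S \<and> Y \<in> S \<and> X \<subset> Y}"
    unfolding wf_iff_no_infinite_down_chain
  proof
    assume "\<exists>f. \<forall>i. (f (Suc i), f i) \<in> {(X, Y). X \<in> S \<and> Y \<in> S \<and> X \<subset> Y}"
    then obtain f where in_S: "\<And>i. f i \<in> S" and desc: "\<And>i. f (Suc i) \<subset> f i"
      by blast
    obtain i j where "i < j" "f i \<subseteq> f j"
      using good[of f] in_S by blast
    moreover have "f j \<subseteq> f (Suc i)"
      by (rule lift_Suc_antimono_le[of f]) (use desc \<open>i < j\<close> in auto)
    ultimately show False
      using desc[of i] by blast
  qed
next
  assume "\<exists>A. A \<subseteq> S \<and> infinite A \<and> (\<forall>X\<in>A. \<forall>Y\<in>A. X \<noteq> Y \<longrightarrow> \<not> X \<subseteq> Y \<and> \<not> Y \<subseteq> X)"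
  then obtain A where A: "A \<subseteq> S" "infinite A"
    and antichain: "\<forall>X\<in>A. \<forall>Y\<in>A. X \<noteq> Y \<longrightarrow> \<not> X \<subseteq> Y \<and> \<not> Y \<subseteq> X"
    by (elim exE conjE)
  obtain h :: "nat \<Rightarrow> 'b set" where h: "inj h" "range h \<subseteq> A"
    using infinite_countable_subset[OF A(2)] by (elim exE conjE)
  obtain i j where "i < j" "h i \<subseteq> h j"
    using good[of h] h(2) A(1) by auto
  moreover have "h i \<noteq> h j"
    using h(1) \<open>i < j\<close> by (metis injD less_irrefl)
  moreover have "h i \<in> A" "h j \<in> A"
    using h(2) by auto
  ultimately show False
    using antichain by blast
qed

lemma ex_nat_Suc_conv: "(\<exists>i. P i) \<longleftrightarrow> P 0 \<or> (\<exists>i. P (Suc i))"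
  by (metis not0_implies_Suc)

lemma left_quot_empty: "left_quot u {} = {}"
  by (simp add: left_quot_def)

lemma left_quot_Cons: "left_quot (a # u) X = left_quot u (left_quot [a] X)"
  by (simp add: left_quot_def)

lemma left_quot_closed:
  assumes "\<And>a X. X \<in> K \<Longrightarrow> left_quot [a] X \<in> K" and "X \<in> K"
  shows "left_quot u X \<in> K"
  using assms(2)
proof (induction u arbitrary: X)
  case Nil
  then show ?case by (simp add: left_quot_def)
next
  case (Cons a u)
  have "left_quot u (left_quot [a] X) \<in> K"
    by (rule Cons.IH[OF assms(1)[OF Cons.prems]])
  then show ?case
    by (simp only: left_quot_Cons[of a u X])
qed

definition less_in_both :: "'a::order \<times> 'a \<Rightarrow> 'a \<times> 'a \<Rightarrow> bool" where
  "less_in_both a b \<longleftrightarrow> fst a < fst b \<and> snd a < snd b"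

definition W_mu_after :: "'a::wellorder \<times> 'a \<Rightarrow> ('a \<times> 'a) word set" where
  "W_mu_after c = {w \<in> W_mu. \<not> less_in_both c (w 0)}"

definition W_mu_quotients :: "('a::wellorder \<times> 'a) word set set" where
  "W_mu_quotients = insert {} (insert W_mu (range W_mu_after))"

lemma W_mu_iff: "w \<in> W_mu \<longleftrightarrow> \<not> (\<exists>i. less_in_both (w i) (w (Suc i)))"
  by (simp add: W_mu_def less_in_both_def)

lemma build_in_W_mu_iff: "a ## w \<in> W_mu \<longleftrightarrow> \<not> less_in_both a (w 0) \<and> w \<in> W_mu"
  unfolding W_mu_iff ex_nat_Suc_conv[of "\<lambda>i. less_in_both ((a ## w) i) ((a ## w) (Suc i))"]
  by simp

lemma left_quot_single: "left_quot [a] X = {w. a ## w \<in> X}"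
  by (simp add: left_quot_def)

lemma left_quot_single_W_mu: "left_quot [a] W_mu = W_mu_after a"
  by (auto simp: left_quot_single build_in_W_mu_iff W_mu_after_def)

lemma left_quot_single_W_mu_after:
  "left_quot [a] (W_mu_after c) = (if less_in_both c a then {} else W_mu_after a)"
  by (auto simp: left_quot_single build_in_W_mu_iff W_mu_after_def)

lemma Res_W_mu_subset: "Res (W_mu :: ('a::wellorder \<times> 'a) word set) \<subseteq> W_mu_quotients"
proof -
  have "left_quot u (W_mu :: ('a \<times> 'a) word set) \<in> W_mu_quotients" for u
  proof (rule left_quot_closed)
    fix a X
    assume "X \<in> W_mu_quotients"
    then consider "X = {}" | "X = W_mu" | c where "X = W_mu_after c"
      unfolding W_mu_quotients_def by blast
    then show "left_quot [a] X \<in> W_mu_quotients"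
      by cases (simp_all add: W_mu_quotients_def left_quot_empty left_quot_single_W_mu
          left_quot_single_W_mu_after)
  qed (simp add: W_mu_quotients_def)
  then show ?thesis
    by (auto simp: Res_def)
qed

lemma W_mu_after_mono:
  assumes "fst c \<le> fst d" "snd c \<le> snd d"
  shows "W_mu_after c \<subseteq> W_mu_after d"
  using assms by (auto simp: W_mu_after_def less_in_both_def)

lemma W_mu_quotients_good:
  fixes f :: "nat \<Rightarrow> ('a::wellorder \<times> 'a) word set"
  assumes "range f \<subseteq> W_mu_quotients"
  shows "\<exists>i j. i < j \<and> f i \<subseteq> f j"
proof -
  have sub_W_mu: "f i \<subseteq> W_mu" for i
    using assms by (auto simp: W_mu_quotients_def W_mu_after_def)
  consider i where "f i = {}" | j where "j > 0" "f j = W_mu"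
    | "\<forall>n. \<exists>c. f (Suc n) = W_mu_after c"
    using assms unfolding W_mu_quotients_def by (metis image_iff insertE range_subsetD zero_less_Suc)
  then show ?thesis
  proof cases
    case (1 i)
    then show ?thesis by (intro exI[of _ i] exI[of _ "Suc i"]) simp
  next
    case (2 j)
    then show ?thesis using sub_W_mu by blast
  next
    case 3
    then obtain c where c: "\<And>n. f (Suc n) = W_mu_after (c n)"
      by metis
    obtain i j where "i < j" "fst (c i) \<le> fst (c j)" "snd (c i) \<le> snd (c j)"
      using dickson_prod_wellorder by blast
    then show ?thesis
      using W_mu_after_mono c by (metis Suc_mono)
  qed
qed

theorem lemma5p3:
  assumes "is_inf_cardinal_order TYPE('a::wellorder)"
  shows "wqo_incl (Res (W_mu :: ('a \<times> 'a) word set))"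
  using Res_W_mu_subset W_mu_quotients_good by (intro wqo_incl_if_good) blast

end
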